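(* Let $n\ge 2$, let $d$ be prime, and let $f:\mathbb{Z}_{c_1}\times\cdots\times\mathbb{Z}_{c_n}\to\mathbb{Z}_d$ be a function that is not bipartite linear. Then the only non-signalling distribution $p(\mathbf{m}|\mathbf{s})$ (with $m_j\in\mathbb{Z}_d$) whose correlator is the deterministic correlator $p(k|\mathbf{s})=\delta^k_{f(\mathbf{s})}$ is $$p(\mathbf{m}|\mathbf{s})=\begin{cases} d^{1-n} & \text{if } [\sum_{j=1}^n m_j]_d=f(\mathbf{s}),\\ 0&\text{otherwise.}\end{cases}$$
   Context: Correlator: $p(k|\mathbf{s})=\sum_{\mathbf{m}:[\sum_j m_j]_d=k}p(\mathbf{m}|\mathbf{s})$, with $[\cdot]_d$ reduction mod $d$. Non-signalling: for every subset $\mathcal{J}\subseteq\{1,\dots,n\}$ and inputs $\mathbf{s},\mathbf{s}'$ that agree on all coordinates outside $\mathcal{J}$, $\sum_{(m_j)_{j\in\mathcal{J}}}p(\mathbf{m}|\mathbf{s})=\sum_{(m_j)_{j\in\mathcal{J}}}p(\mathbf{m}|\mathbf{s}')$. A function $f$ is bipartite linear if there exist a nonempty proper subset $\mathcal{J}\subset\{1,\dots,n\}$ with complement $\mathcal{J}^c$ and functions $f^1$ of $(s_j)_{j\in\mathcal{J}}$ and $f^2$ of $(s_j)_{j\in\mathcal{J}^c}$, both valued in $\mathbb{Z}_d$, with $f(\mathbf{s})=[f^1((s_j)_{j\in\mathcal{J}})+f^2((s_j)_{j\in\mathcal{J}^c})]_d$. *)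

theory Defs
  imports Complex_Main "HOL-Computational_Algebra.Primes"
begin

text \<open>Parties are indexed by 0..n-1. An input string s lies in
  Z_{c_0} x ... x Z_{c_{n-1}}, encoded as s :: nat => nat with s j < c j for j < n
  and s j = 0 for j >= n (extensional).\<close>

definition inputs :: "(nat \<Rightarrow> nat) \<Rightarrow> nat \<Rightarrow> (nat \<Rightarrow> nat) set" where
  "inputs c n = {s. (\<forall>j<n. s j < c j) \<and> (\<forall>j\<ge>n. s j = 0)}"

definition outputs :: "nat \<Rightarrow> nat \<Rightarrow> (nat \<Rightarrow> nat) set" where
  "outputs d n = {m. (\<forall>j<n. m j < d) \<and> (\<forall>j\<ge>n. m j = 0)}"

definition is_cond_distr ::
  "nat \<Rightarrow> (nat \<Rightarrow> nat) \<Rightarrow> nat \<Rightarrow> ((nat \<Rightarrow> nat) \<Rightarrow> (nat \<Rightarrow> nat) \<Rightarrow> real) \<Rightarrow> bool" where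
  "is_cond_distr n c d p \<longleftrightarrow>
     (\<forall>s\<in>inputs c n. (\<forall>m\<in>outputs d n. p m s \<ge> 0) \<and> (\<Sum>m\<in>outputs d n. p m s) = 1)"

definition correlator ::
  "nat \<Rightarrow> nat \<Rightarrow> ((nat \<Rightarrow> nat) \<Rightarrow> (nat \<Rightarrow> nat) \<Rightarrow> real) \<Rightarrow> (nat \<Rightarrow> nat) \<Rightarrow> nat \<Rightarrow> real" where
  "correlator n d p s k = (\<Sum>m\<in>{m\<in>outputs d n. (\<Sum>j<n. m j) mod d = k}. p m s)"

text \<open>Non-signalling: for every J subset of the parties and inputs s, s' agreeing
  outside J, the marginal on the complement of J (i.e. summing out the outputs in J,
  for each fixed value m0 of the outputs outside J) coincides.\<close>

definition non_signalling ::
  "nat \<Rightarrow> (nat \<Rightarrow> nat) \<Rightarrow> nat \<Rightarrow> ((nat \<Rightarrow> nat) \<Rightarrow> (nat \<Rightarrow> nat) \<Rightarrow> real) \<Rightarrow> bool" where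
  "non_signalling n c d p \<longleftrightarrow>
     (\<forall>J. J \<subseteq> {..<n} \<longrightarrow>
       (\<forall>s\<in>inputs c n. \<forall>s'\<in>inputs c n. (\<forall>j\<in>{..<n} - J. s j = s' j) \<longrightarrow>
         (\<forall>m0\<in>outputs d n.
            (\<Sum>m\<in>{m\<in>outputs d n. \<forall>j\<in>{..<n} - J. m j = m0 j}. p m s) =
            (\<Sum>m\<in>{m\<in>outputs d n. \<forall>j\<in>{..<n} - J. m j = m0 j}. p m s'))))"

definition bipartite_linear ::
  "nat \<Rightarrow> (nat \<Rightarrow> nat) \<Rightarrow> nat \<Rightarrow> ((nat \<Rightarrow> nat) \<Rightarrow> nat) \<Rightarrow> bool" where
  "bipartite_linear n c d f \<longleftrightarrow>
     (\<exists>J f1 f2. J \<noteq> {} \<and> J \<subset> {..<n} \<and>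
        (\<forall>s\<in>inputs c n. f1 s < d \<and> f2 s < d) \<and>
        (\<forall>s\<in>inputs c n. \<forall>s'\<in>inputs c n. (\<forall>j\<in>J. s j = s' j) \<longrightarrow> f1 s = f1 s') \<and>
        (\<forall>s\<in>inputs c n. \<forall>s'\<in>inputs c n. (\<forall>j\<in>{..<n} - J. s j = s' j) \<longrightarrow> f2 s = f2 s') \<and>
        (\<forall>s\<in>inputs c n. f s = (f1 s + f2 s) mod d))"

end

theory Submission
  imports Defs "HOL-Number_Theory.Cong"
begin

text \<open>For a coefficient vector \<open>k \<in> \<int>\<^sub>d\<^sup>n\<close> consider the law of \<open>k\<cdot>m mod d\<close> under
  \<open>p(\<cdot>|s)\<close>. All mass sits on outputs with \<open>\<Sum>m \<equiv> f(s)\<close>, so replacing \<open>k\<close> by \<open>k - a\<cdot>1\<close> only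
  translates this law by \<open>a f(s)\<close>; with \<open>a = k\<^sub>j\<close> the coefficient of party \<open>j\<close> vanishes and,
  by non-signalling, the law no longer depends on \<open>s\<^sub>j\<close>. Hence whether the law is uniform does
  not depend on \<open>s\<close>. If it were non-uniform for some non-constant \<open>k\<close>, comparing the inputs
  \<open>u\<close>, \<open>u\<close> with \<open>s\<^sub>i\<close> or \<open>s\<^sub>j\<close> or both reset (where \<open>k\<^sub>i \<noteq> k\<^sub>j\<close>) would show that \<open>f\<close> has no
  interaction between the parties where \<open>k = k\<^sub>0\<close> and the others, i.e. \<open>f\<close> is bipartite linear.
  So the law is uniform for every non-constant \<open>k\<close>, and computing \<open>\<Sum>\<^sub>k P(k\<cdot>m \<equiv> k\<cdot>x)\<close> in two
  ways determines \<open>p(x|s)\<close>.\<close>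

lemma outputs_0: "outputs d 0 = {\<lambda>_. 0}"
  by (auto simp: outputs_def)

lemma outputs_Suc: "outputs d (Suc n) = (\<lambda>(m,t). m(n:=t)) ` (outputs d n \<times> {..<d})"
proof (rule set_eqI, rule iffI)
  fix m assume m: "m \<in> outputs d (Suc n)"
  have "m(n:=0) \<in> outputs d n" using m by (auto simp: outputs_def)
  moreover have "m n < d" using m by (auto simp: outputs_def)
  ultimately show "m \<in> (\<lambda>(m,t). m(n:=t)) ` (outputs d n \<times> {..<d})"
    by (intro image_eqI[of _ _ "(m(n:=0), m n)"]) auto
next
  fix m assume "m \<in> (\<lambda>(m,t). m(n:=t)) ` (outputs d n \<times> {..<d})"
  then show "m \<in> outputs d (Suc n)" by (auto simp: outputs_def less_Suc_eq)
qed

lemma finite_outputs: "finite (outputs d n)"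
  by (induction n) (auto simp: outputs_Suc outputs_0)

lemma card_outputs: "card (outputs d n) = d ^ n"
proof (induction n)
  case 0 then show ?case by (simp add: outputs_0)
next
  case (Suc n)
  have "inj_on (\<lambda>(m,t). m(n:=t)) (outputs d n \<times> {..<d})"
  proof (rule inj_onI, clarify)
    fix m t m' t' assume "m \<in> outputs d n" "m' \<in> outputs d n" and e: "m(n:=t) = m'(n:=t')"
    then have "m n = 0" "m' n = 0" by (auto simp: outputs_def)
    with e show "m = m' \<and> t = t'" by (metis fun_upd_same fun_upd_triv fun_upd_upd)
  qed
  then show ?case by (simp add: outputs_Suc card_image card_cartesian_product Suc.IH)
qed

lemma card_filter_eq_sum:
  assumes "finite A"
  shows "card {x\<in>A. P x} = (\<Sum>x\<in>A. if P x then 1 else 0::nat)"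
  using sum.inter_filter[OF assms, of "\<lambda>_. 1::nat" P] by simp

lemma sum_if_const:
  assumes "finite F"
  shows "(\<Sum>m\<in>F. if P m then (a::real) else 0) = real (card {m\<in>F. P m}) * a"
  using sum.inter_filter[OF assms, of "\<lambda>_. a" P] by simp

lemma sum_split_coordinate:
  fixes g :: "(nat \<Rightarrow> nat) \<Rightarrow> 'a::comm_monoid_add"
  assumes "finite F" "0 < d" "\<forall>m\<in>F. m i < d" "\<forall>m\<in>F. \<forall>t<d. m(i:=t) \<in> F"
  shows "sum g F = (\<Sum>m'\<in>{m\<in>F. m i = 0}. \<Sum>t<d. g (m'(i:=t)))"
proof -
  let ?F0 = "{m\<in>F. m i = 0}"
  let ?h = "\<lambda>(m::nat\<Rightarrow>nat,t::nat). m(i:=t)"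
  have inj: "inj_on ?h (?F0 \<times> {..<d})"
    by (rule inj_onI, clarify) (metis fun_upd_same fun_upd_triv fun_upd_upd)
  have img: "?h ` (?F0 \<times> {..<d}) = F"
  proof (rule set_eqI, rule iffI)
    fix m assume "m \<in> ?h ` (?F0 \<times> {..<d})"
    then show "m \<in> F" using assms(4) by auto
  next
    fix m assume m: "m \<in> F"
    have "m(i:=0) \<in> F" using assms(2,4) m by auto
    moreover have "m i < d" using assms(3) m by auto
    ultimately show "m \<in> ?h ` (?F0 \<times> {..<d})"
      by (intro image_eqI[of _ _ "(m(i:=0), m i)"]) auto
  qed
  have "sum g F = sum (g \<circ> ?h) (?F0 \<times> {..<d})"
    using sum.reindex[OF inj, of g] img by simp
  also have "\<dots> = (\<Sum>m'\<in>?F0. \<Sum>t<d. g (m'(i:=t)))"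
    by (simp add: sum.cartesian_product case_prod_unfold)
  finally show ?thesis .
qed

lemma sum_outputs_split_coordinate:
  assumes "i < n" "0 < d"
  shows "sum g (outputs d n) = (\<Sum>m'\<in>{m\<in>outputs d n. m i = 0}. \<Sum>t<d. g (m'(i:=t)))"
  using assms finite_outputs[of d n] by (intro sum_split_coordinate) (auto simp: outputs_def)

lemma card_outputs_coordinate_zero:
  assumes "i < n" "0 < d"
  shows "card {m\<in>outputs d n. m i = 0} = d ^ (n - 1)"
proof -
  have "d ^ n = (\<Sum>m\<in>outputs d n. 1::nat)" using card_outputs by simp
  also have "\<dots> = card {m\<in>outputs d n. m i = 0} * d"
    using sum_outputs_split_coordinate[OF assms, of "\<lambda>_. 1::nat"] by simp
  finally have "d ^ n = card {m\<in>outputs d n. m i = 0} * d" .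
  moreover have "d ^ n = d ^ (n - 1) * d" using assms(1)
    by (metis Suc_pred' gr_implies_not0 mult.commute not_gr_zero power_Suc)
  ultimately show ?thesis using assms(2) by simp
qed

section \<open>Linear congruences modulo a prime\<close>

lemma card_affine_cong_zero:
  fixes d e C :: nat
  assumes "prime d" "\<not> d dvd e"
  shows "card {t. t < d \<and> [C + t * e = 0] (mod d)} = 1"
proof -
  have cop: "coprime e d"
    using assms prime_imp_coprime[of d e] coprime_commute by blast
  obtain x where x: "[e * x = 1] (mod d)" using cong_solve_coprime_nat[OF cop] by auto
  have d0: "0 < d" using assms prime_gt_0_nat by blast
  define t0 where "t0 = (x * (d - C mod d)) mod d"
  have t0d: "t0 < d" using d0 by (simp add: t0_def)
  have "[C + t0 * e = C + (x * (d - C mod d)) * e] (mod d)"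
    by (intro cong_add cong_mult) (auto simp: t0_def cong_def)
  also have "(x * (d - C mod d)) * e = (e * x) * (d - C mod d)" by simp
  also have "[C + (e * x) * (d - C mod d) = C + 1 * (d - C mod d)] (mod d)"
    by (rule cong_add[OF cong_refl], rule cong_mult[OF x cong_refl])
  also have "[C + 1 * (d - C mod d) = C mod d + (d - C mod d)] (mod d)"
    by (simp add: cong_def mod_add_left_eq)
  also have "C mod d + (d - C mod d) = d" using d0 by simp
  also have "[d = 0] (mod d)" by (simp add: cong_def)
  finally have t0s: "[C + t0 * e = 0] (mod d)" .
  have uniq: "t = t0" if "t < d" "[C + t * e = 0] (mod d)" for t
  proof -
    have "[C + t * e = C + t0 * e] (mod d)" using cong_trans[OF that(2) cong_sym[OF t0s]] .
    then have "[t * e = t0 * e] (mod d)" by (simp add: cong_add_lcancel_nat)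
    then have "[t = t0] (mod d)" using cop cong_mult_rcancel_nat by blast
    then show ?thesis using that(1) t0d by (simp add: cong_def)
  qed
  have "{t. t < d \<and> [C + t * e = 0] (mod d)} = {t0}"
    using uniq t0d t0s by blast
  then show ?thesis by simp
qed

lemma pred_mult_add_self: "0 < d \<Longrightarrow> (d - 1) * e + e = (d::nat) * e"
  by (cases d) auto

text \<open>In \<open>\<nat>\<close>, \<open>(d - 1) * Y\<close> stands for \<open>-Y\<close> modulo \<open>d\<close>.\<close>

lemma mod_eq_iff_cong_zero:
  fixes X Y d :: nat assumes "0 < d"
  shows "X mod d = Y mod d \<longleftrightarrow> [X + (d - 1) * Y = 0] (mod d)"
proof -
  have "X mod d = Y mod d \<longleftrightarrow> [X + (d - 1) * Y = Y + (d - 1) * Y] (mod d)"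
    unfolding cong_add_rcancel_nat by (simp add: cong_def)
  also have "Y + (d - 1) * Y = d * Y" using pred_mult_add_self[OF assms] by (metis add.commute)
  also have "[X + (d - 1) * Y = d * Y] (mod d) \<longleftrightarrow> [X + (d - 1) * Y = 0] (mod d)"
    by (simp add: cong_def)
  finally show ?thesis .
qed

lemma card_affine_mod_eq:
  fixes d a b A B :: nat
  assumes "prime d" "a < d" "b < d" "a \<noteq> b"
  shows "card {t. t < d \<and> (A + t * a) mod d = (B + t * b) mod d} = 1"
proof -
  have d0: "0 < d" using assms prime_gt_0_nat by blast
  let ?e = "a + (d - 1) * b"
  have nd: "\<not> d dvd ?e"
  proof
    assume "d dvd ?e"
    then have "[?e + b = 0 + b] (mod d)" by (intro cong_add) (simp_all add: cong_0_iff)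
    moreover have "?e + b = a + d * b" using pred_mult_add_self[OF d0, of b] by (simp only: add.assoc)
    ultimately have "[a + d * b = b] (mod d)" by (simp only: add_0_left)
    then have "[a = b] (mod d)" by (simp add: cong_def)
    then show False using assms by (simp add: cong_def)
  qed
  have "(A + t * a) mod d = (B + t * b) mod d \<longleftrightarrow> [(A + (d - 1) * B) + t * ?e = 0] (mod d)" for t
  proof -
    have "(A + t * a) + (d - 1) * (B + t * b) = (A + (d - 1) * B) + t * ?e"
      by (simp add: algebra_simps)
    then show ?thesis by (simp only: mod_eq_iff_cong_zero[OF d0])
  qed
  then show ?thesis using card_affine_cong_zero[OF assms(1) nd] by simp
qed

lemma not_dvd_add_diff:
  fixes a b d :: nat
  assumes "a < d" "b < d" "a \<noteq> b"
  shows "\<not> d dvd b + (d - a)"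
  using assms by (metis mod_add_self2 mod_less mod_nat_eqI nat_less_le
      ordered_cancel_comm_monoid_diff_class.diff_add_assoc trans_le_add2)

section \<open>Periodic functions on residues\<close>

definition constant_fun :: "(nat \<Rightarrow> real) \<Rightarrow> bool" where
  "constant_fun P \<longleftrightarrow> (\<forall>v. P v = P 0)"

lemma constant_fun_if_periodic:
  fixes P :: "nat \<Rightarrow> real" and d \<tau> :: nat
  assumes per: "\<forall>v. P (v mod d) = P v" and tau: "\<forall>z. P (z + \<tau>) = P z"
    and pr: "prime d" and nd: "\<not> d dvd \<tau>"
  shows "constant_fun P"
proof -
  have d0: "0 < d" using pr prime_gt_0_nat by blast
  have iter: "P (z + j * \<tau>) = P z" for z j
    by (induction j arbitrary: z) (simp_all, metis add.assoc tau)
  have "coprime \<tau> d" using prime_imp_coprime[of d \<tau>] pr nd coprime_commute by blast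
  then obtain x where x: "[\<tau> * x = 1] (mod d)" using cong_solve_coprime_nat by auto
  show ?thesis unfolding constant_fun_def
  proof
    fix v
    let ?j = "x * (d - v mod d)"
    have "v + ?j * \<tau> = v + (\<tau> * x) * (d - v mod d)" by (simp add: algebra_simps)
    also have "[\<dots> = v + 1 * (d - v mod d)] (mod d)" by (intro cong_add cong_mult x) auto
    also have "[v + 1 * (d - v mod d) = v mod d + (d - v mod d)] (mod d)"
      by (simp add: cong_def mod_add_left_eq)
    also have "v mod d + (d - v mod d) = d" using d0 by simp
    also have "[d = 0] (mod d)" by (simp add: cong_def)
    finally have "(v + ?j * \<tau>) mod d = 0" by (simp add: cong_def)
    then show "P v = P 0" using iter[of v ?j] per[rule_format, of "v + ?j * \<tau>"] by simp
  qed
qed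

lemma constant_fun_shift_iff:
  fixes P :: "nat \<Rightarrow> real"
  assumes per: "\<forall>v. P (v mod d) = P v" and d0: "0 < d"
  shows "constant_fun (\<lambda>v. P (v + e)) \<longleftrightarrow> constant_fun P"
proof
  assume "constant_fun P" then show "constant_fun (\<lambda>v. P (v + e))"
    by (simp add: constant_fun_def) (metis)
next
  assume Q: "constant_fun (\<lambda>v. P (v + e))"
  have "P v = P e" for v
  proof -
    have "P v = P (v + d * e)" using per[rule_format, of "v + d * e"] per[rule_format, of v] by simp
    also have "v + d * e = (v + (d - 1) * e) + e" using pred_mult_add_self[OF d0, of e] by simp
    also have "P \<dots> = P (0 + e)" using Q unfolding constant_fun_def by metis
    finally show ?thesis by simp
  qed
  then show "constant_fun P" unfolding constant_fun_def by metis
qed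

lemma translate_eq_if_related:
  fixes P Q :: "nat \<Rightarrow> real"
  assumes PQ: "\<And>y. P (y + a) = Q (y + b)" and PQ': "\<And>y. P (y + a') = Q (y + b')"
  shows "P (y + (a + b')) = P (y + (a' + b))"
proof -
  have "P (y + (a + b')) = P ((y + b') + a)" by (simp add: ac_simps)
  also have "\<dots> = Q ((y + b') + b)" by (rule PQ)
  also have "\<dots> = Q ((y + b) + b')" by (simp add: ac_simps)
  also have "\<dots> = P ((y + b) + a')" by (rule PQ'[symmetric])
  also have "\<dots> = P (y + (a' + b))" by (simp add: ac_simps)
  finally show ?thesis .
qed

lemma cong_if_shift_invariant:
  fixes P :: "nat \<Rightarrow> real"
  assumes pr: "prime d" and per: "\<forall>v. P (v mod d) = P v" and nc: "\<not> constant_fun P"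
    and inv: "\<forall>y. P (y + \<alpha>) = P (y + \<beta>)"
  shows "[\<alpha> = \<beta>] (mod d)"
proof -
  have d0: "0 < d" using pr prime_gt_0_nat by blast
  define \<tau> where "\<tau> = (d - 1) * \<alpha> + \<beta>" \<comment> \<open>\<open>\<beta> - \<alpha>\<close> modulo \<open>d\<close>\<close>
  have "P (z + \<tau>) = P z" for z
  proof -
    have "P (z + \<tau>) = P ((z + (d - 1) * \<alpha>) + \<beta>)" by (simp add: \<tau>_def algebra_simps)
    also have "\<dots> = P ((z + (d - 1) * \<alpha>) + \<alpha>)" using inv by simp
    also have "(z + (d - 1) * \<alpha>) + \<alpha> = z + d * \<alpha>" using pred_mult_add_self[OF d0, of \<alpha>] by simp
    also have "P (z + d * \<alpha>) = P z" using per[rule_format, of "z + d * \<alpha>"] per[rule_format, of z] by simp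
    finally show ?thesis .
  qed
  then have "d dvd \<tau>" using constant_fun_if_periodic[OF per _ pr] nc by blast
  then have "[\<alpha> = \<alpha> + \<tau>] (mod d)"
    by (metis cong_add_lcancel_0_nat cong_0_iff cong_sym)
  also have "\<alpha> + \<tau> = d * \<alpha> + \<beta>" using pred_mult_add_self[OF d0, of \<alpha>] by (simp add: \<tau>_def)
  also have "[d * \<alpha> + \<beta> = \<beta>] (mod d)" by (simp add: cong_def)
  finally show ?thesis .
qed

definition dot :: "nat \<Rightarrow> (nat \<Rightarrow> nat) \<Rightarrow> (nat \<Rightarrow> nat) \<Rightarrow> nat" where
  "dot n K m = (\<Sum>j<n. K j * m j)"

lemma dot_fun_upd:
  assumes "K i = 0" "i < n"
  shows "dot n (K(i:=t)) m = dot n K m + t * m i"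
proof -
  have "dot n (K(i:=t)) m = (\<Sum>j<n. K j * m j + (if j = i then t * m i else 0))"
    unfolding dot_def by (rule sum.cong) (use assms in auto)
  then show ?thesis using assms by (simp add: sum.distrib dot_def)
qed

lemma sum_fun_upd:
  fixes m :: "nat \<Rightarrow> nat"
  assumes "m i = 0" "i < n"
  shows "(\<Sum>j<n. (m(i:=t)) j) = (\<Sum>j<n. m j) + t"
proof -
  have "(\<Sum>j<n. (m(i:=t)) j) = (\<Sum>j<n. m j + (if j = i then t else 0))"
    by (rule sum.cong) (use assms in auto)
  then show ?thesis using assms by (simp add: sum.distrib)
qed

lemma card_dot_cong_eq:
  assumes pr: "prime d" and m: "m \<in> outputs d n" and x: "x \<in> outputs d n" and ne: "m \<noteq> x"
  shows "card {k\<in>outputs d n. dot n k m mod d = dot n k x mod d} = d ^ (n - 1)"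
proof -
  have d0: "0 < d" using pr prime_gt_0_nat by blast
  obtain i where i: "i < n" "m i \<noteq> x i"
    using m x ne by (auto simp: outputs_def fun_eq_iff) (metis not_less)
  have mi: "m i < d" and xi: "x i < d" using m x i by (auto simp: outputs_def)
  let ?P = "\<lambda>k. dot n k m mod d = dot n k x mod d"
  have "card {k\<in>outputs d n. ?P k} = (\<Sum>k\<in>outputs d n. if ?P k then 1 else 0::nat)"
    by (rule card_filter_eq_sum[OF finite_outputs])
  also have "\<dots> = (\<Sum>k'\<in>{k\<in>outputs d n. k i = 0}. \<Sum>t<d. if ?P (k'(i:=t)) then 1 else 0::nat)"
    by (rule sum_outputs_split_coordinate[OF i(1) d0])
  also have "\<dots> = (\<Sum>k'\<in>{k\<in>outputs d n. k i = 0}. 1::nat)"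
  proof (rule sum.cong[OF refl])
    fix k' assume k': "k' \<in> {k\<in>outputs d n. k i = 0}"
    have "(\<Sum>t<d. if ?P (k'(i:=t)) then 1 else 0::nat) = card {t\<in>{..<d}. ?P (k'(i:=t))}"
      by (rule card_filter_eq_sum[symmetric]) simp
    also have "{t\<in>{..<d}. ?P (k'(i:=t))} =
        {t. t < d \<and> (dot n k' m + t * m i) mod d = (dot n k' x + t * x i) mod d}"
      using k' dot_fun_upd[of k' i n] i(1) by auto
    also have "card \<dots> = 1" by (rule card_affine_mod_eq[OF pr mi xi i(2)])
    finally show "(\<Sum>t<d. if ?P (k'(i:=t)) then 1 else 0::nat) = 1" .
  qed
  also have "\<dots> = d ^ (n - 1)" using card_outputs_coordinate_zero[OF i(1) d0] by simp
  finally show ?thesis .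
qed

lemma card_sum_mod_eq:
  fixes F :: "(nat \<Rightarrow> nat) set"
  assumes pr: "prime d" and fin: "finite F" and i: "i < n" and Fi: "\<forall>m\<in>F. m i < d"
    and Fc: "\<forall>m\<in>F. \<forall>t<d. m(i:=t) \<in> F" and v: "v < d"
  shows "card {m\<in>F. (\<Sum>j<n. m j) mod d = v} = card {m\<in>F. m i = 0}"
proof -
  have d1: "1 < d" using pr prime_gt_1_nat by blast
  then have d0: "0 < d" by simp
  let ?P = "\<lambda>m. (\<Sum>j<n. m j) mod d = v"
  have "card {m\<in>F. ?P m} = (\<Sum>m\<in>F. if ?P m then 1 else 0::nat)"
    by (rule card_filter_eq_sum[OF fin])
  also have "\<dots> = (\<Sum>m'\<in>{m\<in>F. m i = 0}. \<Sum>t<d. if ?P (m'(i:=t)) then 1 else 0::nat)"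
    by (rule sum_split_coordinate[OF fin d0 Fi Fc])
  also have "\<dots> = (\<Sum>m'\<in>{m\<in>F. m i = 0}. 1::nat)"
  proof (rule sum.cong[OF refl])
    fix m' assume m': "m' \<in> {m\<in>F. m i = 0}"
    have "(\<Sum>t<d. if ?P (m'(i:=t)) then 1 else 0::nat) = card {t\<in>{..<d}. ?P (m'(i:=t))}"
      by (rule card_filter_eq_sum[symmetric]) simp
    also have "{t\<in>{..<d}. ?P (m'(i:=t))} =
        {t. t < d \<and> ((\<Sum>j<n. m' j) + t * 1) mod d = (v + t * 0) mod d}"
      using m' sum_fun_upd[of m' i n] i v by auto
    also have "card \<dots> = 1" by (rule card_affine_mod_eq[OF pr d1 d0]) simp
    finally show "(\<Sum>t<d. if ?P (m'(i:=t)) then 1 else 0::nat) = 1" .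
  qed
  finally show ?thesis by simp
qed

lemma card_outputs_sum_mod_eq:
  assumes "prime d" "0 < n" "v < d"
  shows "card {m\<in>outputs d n. (\<Sum>j<n. m j) mod d = v} = d ^ (n - 1)"
proof -
  have "0 < d" using assms(1) prime_gt_0_nat by blast
  have "card {m\<in>outputs d n. (\<Sum>j<n. m j) mod d = v} = card {m\<in>outputs d n. m 0 = 0}"
    using assms by (intro card_sum_mod_eq finite_outputs) (auto simp: outputs_def)
  also have "\<dots> = d ^ (n - 1)"
    using assms \<open>0 < d\<close> by (intro card_outputs_coordinate_zero)
  finally show ?thesis .
qed

definition const_coeffs :: "nat \<Rightarrow> nat \<Rightarrow> nat \<Rightarrow> nat" where
  "const_coeffs n t = (\<lambda>j. if j < n then t else 0)"

lemma dot_const_coeffs: "dot n (const_coeffs n t) m = t * (\<Sum>j<n. m j)"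
  by (simp add: dot_def const_coeffs_def sum_distrib_left)

lemma inj_on_const_coeffs: "0 < n \<Longrightarrow> inj_on (const_coeffs n) A"
  by (rule inj_onI) (drule fun_cong[of _ _ 0], simp add: const_coeffs_def)

lemma const_coeffs_outputs: "0 < n \<Longrightarrow> const_coeffs n ` {..<d} \<subseteq> outputs d n"
  by (auto simp: const_coeffs_def outputs_def)

lemma nonconstant_if_notin_const_coeffs:
  assumes "k \<in> outputs d n" "k \<notin> const_coeffs n ` {..<d}" "0 < n"
  shows "\<exists>j<n. k j \<noteq> k 0"
proof (rule ccontr)
  assume const: "\<not> (\<exists>j<n. k j \<noteq> k 0)"
  have "k = const_coeffs n (k 0)"
  proof
    fix j show "k j = const_coeffs n (k 0) j"
    proof (cases "j < n")
      case True
      then have "k j = k 0" using const by blast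
      then show ?thesis using True by (simp add: const_coeffs_def)
    qed (use assms(1) in \<open>simp add: const_coeffs_def outputs_def\<close>)
  qed
  moreover have "k 0 < d" using assms(1,3) by (auto simp: outputs_def)
  ultimately show False using assms(2) by blast
qed

section \<open>Distribution of a linear form of the outputs\<close>

definition dot_distr ::
  "nat \<Rightarrow> nat \<Rightarrow> ((nat \<Rightarrow> nat) \<Rightarrow> (nat \<Rightarrow> nat) \<Rightarrow> real) \<Rightarrow> (nat \<Rightarrow> nat) \<Rightarrow> (nat \<Rightarrow> nat) \<Rightarrow> nat \<Rightarrow> real"
where
  "dot_distr n d p K s v = (\<Sum>m\<in>outputs d n. if dot n K m mod d = v mod d then p m s else 0)"

definition coeff_shift :: "nat \<Rightarrow> (nat \<Rightarrow> nat) \<Rightarrow> nat \<Rightarrow> nat \<Rightarrow> nat" where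
  "coeff_shift d K a = (\<lambda>j. (K j + (d - a)) mod d)"

definition zero_on :: "nat set \<Rightarrow> (nat \<Rightarrow> nat) \<Rightarrow> nat \<Rightarrow> nat" where
  "zero_on A u = (\<lambda>j. if j \<in> A then 0 else u j)"

lemma dot_distr_mod: "dot_distr n d p K s (v mod d) = dot_distr n d p K s v"
  by (simp add: dot_distr_def)

lemma coeff_shift_self: "K j < d \<Longrightarrow> coeff_shift d K (K j) j = 0"
  by (simp add: coeff_shift_def)

lemma zero_on_zero_on: "zero_on B (zero_on A u) = zero_on (A \<union> B) u"
  by (auto simp: zero_on_def)

lemma zero_on_inputs: "\<forall>j<n. c j > 0 \<Longrightarrow> u \<in> inputs c n \<Longrightarrow> zero_on A u \<in> inputs c n"
  by (auto simp: zero_on_def inputs_def)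

lemma zero_on_eq_if_agree:
  assumes "\<forall>j\<ge>n. s j = 0" "\<forall>j\<ge>n. s' j = 0" "\<forall>j\<in>{..<n}-A. s j = s' j"
  shows "zero_on A s = zero_on A s'"
proof
  fix j show "zero_on A s j = zero_on A s' j"
    using assms by (cases "j < n") (auto simp: zero_on_def)
qed

lemma zero_on_eq_iff:
  assumes "x \<in> outputs d n" "m \<in> outputs d n"
  shows "zero_on J x = zero_on J m \<longleftrightarrow> (\<forall>j\<in>{..<n}-J. x j = m j)"
proof
  assume "zero_on J x = zero_on J m"
  then show "\<forall>j\<in>{..<n}-J. x j = m j" by (auto simp: zero_on_def fun_eq_iff) (metis)
next
  assume "\<forall>j\<in>{..<n}-J. x j = m j"
  then show "zero_on J x = zero_on J m"
    using assms by (intro zero_on_eq_if_agree) (auto simp: outputs_def)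
qed

lemma dot_distr_by_marginals:
  assumes K0: "\<forall>j\<in>J. K j = 0"
  shows "dot_distr n d p K t v = (\<Sum>y\<in>zero_on J ` outputs d n. if dot n K y mod d = v mod d
           then (\<Sum>m\<in>{x\<in>outputs d n. zero_on J x = y}. p m t) else 0)"
proof -
  have dot_zero_on: "dot n K (zero_on J m) = dot n K m" for m
    unfolding dot_def by (rule sum.cong) (auto simp: zero_on_def K0)
  have "dot_distr n d p K t v = (\<Sum>y\<in>zero_on J ` outputs d n.
          \<Sum>m\<in>{x\<in>outputs d n. zero_on J x = y}. if dot n K m mod d = v mod d then p m t else 0)"
    unfolding dot_distr_def
    by (rule sum.group[symmetric, OF finite_outputs finite_imageI[OF finite_outputs] order_refl])
  also have "\<dots> = (\<Sum>y\<in>zero_on J ` outputs d n. if dot n K y mod d = v mod d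
           then (\<Sum>m\<in>{x\<in>outputs d n. zero_on J x = y}. p m t) else 0)"
  proof (rule sum.cong[OF refl])
    fix y
    have "(\<Sum>m\<in>{x\<in>outputs d n. zero_on J x = y}. if dot n K m mod d = v mod d then p m t else 0)
        = (\<Sum>m\<in>{x\<in>outputs d n. zero_on J x = y}. if dot n K y mod d = v mod d then p m t else 0)"
    proof (rule sum.cong[OF refl])
      fix m assume "m \<in> {x\<in>outputs d n. zero_on J x = y}"
      then have "dot n K y = dot n K m" using dot_zero_on[of m] by auto
      then show "(if dot n K m mod d = v mod d then p m t else 0)
          = (if dot n K y mod d = v mod d then p m t else 0)" by simp
    qed
    then show "(\<Sum>m\<in>{x\<in>outputs d n. zero_on J x = y}. if dot n K m mod d = v mod d then p m t else 0)
        = (if dot n K y mod d = v mod d then \<Sum>m\<in>{x\<in>outputs d n. zero_on J x = y}. p m t else 0)"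
      by simp
  qed
  finally show ?thesis .
qed

section \<open>Functions without interaction between two groups of parties\<close>

definition additive_between ::
  "nat \<Rightarrow> (nat \<Rightarrow> nat) \<Rightarrow> nat \<Rightarrow> ((nat \<Rightarrow> nat) \<Rightarrow> nat) \<Rightarrow> nat set \<Rightarrow> nat set \<Rightarrow> bool"
where
  "additive_between n c d f A B \<longleftrightarrow>
     (\<forall>u\<in>inputs c n. [f u + f (zero_on (A \<union> B) u) = f (zero_on A u) + f (zero_on B u)] (mod d))"

lemma additive_between_sym: "additive_between n c d f A B \<longleftrightarrow> additive_between n c d f B A"
  unfolding additive_between_def by (simp add: Un_commute add.commute)

lemma additive_between_empty: "additive_between n c d f A {}"
  unfolding additive_between_def by (simp add: zero_on_def add.commute)

lemma additive_between_Un: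
  assumes cpos: "\<forall>j<n. c j > 0"
    and h1: "additive_between n c d f A B1" and h2: "additive_between n c d f A B2"
  shows "additive_between n c d f A (B1 \<union> B2)"
  unfolding additive_between_def
proof
  fix u assume u: "u \<in> inputs c n"
  let ?g = "\<lambda>X. f (zero_on X u)"
  have c1: "[f u + ?g (A \<union> B1) = ?g A + ?g B1] (mod d)"
    using h1 u unfolding additive_between_def by (rule bspec)
  have "[f (zero_on B1 u) + f (zero_on (A \<union> B2) (zero_on B1 u))
         = f (zero_on A (zero_on B1 u)) + f (zero_on B2 (zero_on B1 u))] (mod d)"
    using h2 zero_on_inputs[OF cpos u] unfolding additive_between_def by (rule bspec)
  then have c2: "[?g B1 + ?g (A \<union> (B1 \<union> B2)) = ?g (A \<union> B1) + ?g (B1 \<union> B2)] (mod d)"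
    by (simp add: zero_on_zero_on Un_ac)
  have "[(f u + ?g (A \<union> (B1 \<union> B2))) + (?g (A \<union> B1) + ?g B1)
         = (?g A + ?g (B1 \<union> B2)) + (?g (A \<union> B1) + ?g B1)] (mod d)"
    using cong_add[OF c1 c2] by (simp add: ac_simps)
  then show "[f u + ?g (A \<union> (B1 \<union> B2)) = ?g A + ?g (B1 \<union> B2)] (mod d)"
    by (simp only: cong_add_rcancel_nat)
qed

lemma additive_between_finite:
  assumes cpos: "\<forall>j<n. c j > 0" and "finite B" "\<forall>b\<in>B. additive_between n c d f A {b}"
  shows "additive_between n c d f A B"
  using assms(2,3)
proof (induction B rule: finite_induct)
  case empty show ?case by (rule additive_between_empty)
next
  case (insert b B)
  then have "additive_between n c d f A ({b} \<union> B)" by (intro additive_between_Un[OF cpos]) auto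
  then show ?case by simp
qed

lemma additive_between_complement_split:
  assumes cpos: "\<forall>j<n. c j > 0" and frange: "\<forall>s\<in>inputs c n. f s < d"
    and add: "additive_between n c d f J ({..<n} - J)" and s: "s \<in> inputs c n"
  shows "f s = (f (zero_on ({..<n} - J) s) + (f (zero_on J s) + (d - f (\<lambda>_. 0))) mod d) mod d"
proof -
  have "(\<lambda>_. 0) \<in> inputs c n" using cpos by (auto simp: inputs_def)
  then have fz: "f (\<lambda>_. 0) < d" using frange by blast
  have "zero_on (J \<union> ({..<n} - J)) s = (\<lambda>_. 0)"
    using s by (auto simp: zero_on_def inputs_def fun_eq_iff)
  then have "[f s + f (\<lambda>_. 0) = f (zero_on J s) + f (zero_on ({..<n} - J) s)] (mod d)"
    using add s unfolding additive_between_def by metis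
  then have "[f (zero_on J s) + f (zero_on ({..<n} - J) s) + (d - f (\<lambda>_. 0))
              = f s + f (\<lambda>_. 0) + (d - f (\<lambda>_. 0))] (mod d)"
    by (rule cong_add[OF cong_sym cong_refl])
  also have "f s + f (\<lambda>_. 0) + (d - f (\<lambda>_. 0)) = f s + d" using fz by simp
  finally have "(f (zero_on J s) + f (zero_on ({..<n} - J) s) + (d - f (\<lambda>_. 0))) mod d = f s"
    using frange s by (simp add: cong_def)
  then show ?thesis by (simp add: mod_add_right_eq ac_simps)
qed

lemma bipartite_linear_if_additive_between:
  assumes cpos: "\<forall>j<n. c j > 0" and frange: "\<forall>s\<in>inputs c n. f s < d"
    and J: "J \<noteq> {}" "J \<subset> {..<n}" and add: "additive_between n c d f J ({..<n} - J)"
  shows "bipartite_linear n c d f"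
proof -
  define f1 where "f1 s = f (zero_on ({..<n} - J) s)" for s
  define f2 where "f2 s = (f (zero_on J s) + (d - f (\<lambda>_. 0))) mod d" for s
  have "(\<lambda>_. 0) \<in> inputs c n" using cpos by (auto simp: inputs_def)
  then have "0 < d" using frange by fastforce
  then have ranges: "\<forall>s\<in>inputs c n. f1 s < d \<and> f2 s < d"
    using frange zero_on_inputs[OF cpos] by (auto simp: f1_def f2_def)
  have f1_indep: "\<forall>s\<in>inputs c n. \<forall>s'\<in>inputs c n. (\<forall>j\<in>J. s j = s' j) \<longrightarrow> f1 s = f1 s'"
  proof (intro ballI impI)
    fix s s' assume "s \<in> inputs c n" "s' \<in> inputs c n" "\<forall>j\<in>J. s j = s' j"
    then show "f1 s = f1 s'"
      using zero_on_eq_if_agree[of n s s' "{..<n} - J"] by (auto simp: f1_def inputs_def)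
  qed
  have f2_indep: "\<forall>s\<in>inputs c n. \<forall>s'\<in>inputs c n. (\<forall>j\<in>{..<n}-J. s j = s' j) \<longrightarrow> f2 s = f2 s'"
  proof (intro ballI impI)
    fix s s' assume "s \<in> inputs c n" "s' \<in> inputs c n" "\<forall>j\<in>{..<n}-J. s j = s' j"
    then show "f2 s = f2 s'"
      using zero_on_eq_if_agree[of n s s' J] by (simp add: f2_def inputs_def)
  qed
  have "\<forall>s\<in>inputs c n. f s = (f1 s + f2 s) mod d"
    unfolding f1_def f2_def using additive_between_complement_split[OF cpos frange add] by blast
  then show ?thesis
    unfolding bipartite_linear_def using J ranges f1_indep f2_indep
    by (intro exI[of _ J] exI[of _ f1] exI[of _ f2] conjI) assumption+
qed

section \<open>Non-signalling boxes with a deterministic correlator\<close>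

locale deterministic_ns_box =
  fixes n d :: nat and c :: "nat \<Rightarrow> nat" and f :: "(nat \<Rightarrow> nat) \<Rightarrow> nat"
    and p :: "(nat \<Rightarrow> nat) \<Rightarrow> (nat \<Rightarrow> nat) \<Rightarrow> real"
  assumes n_pos: "0 < n" and prime_d: "prime d" and c_pos: "\<forall>j<n. c j > 0"
    and f_range: "\<forall>s\<in>inputs c n. f s < d"
    and cond_distr: "is_cond_distr n c d p" and ns: "non_signalling n c d p"
    and correlator_f: "\<forall>s\<in>inputs c n. \<forall>k<d. correlator n d p s k = (if k = f s then 1 else 0)"
begin

abbreviation Om where "Om \<equiv> outputs d n"
abbreviation Is where "Is \<equiv> inputs c n"
abbreviation D where "D \<equiv> dot_distr n d p"

lemma d_pos: "0 < d" using prime_d prime_gt_0_nat by blast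

lemma p_nonneg: "s \<in> Is \<Longrightarrow> m \<in> Om \<Longrightarrow> p m s \<ge> 0"
  using cond_distr by (auto simp: is_cond_distr_def)

lemma sum_p: "s \<in> Is \<Longrightarrow> (\<Sum>m\<in>Om. p m s) = 1"
  using cond_distr by (auto simp: is_cond_distr_def)

lemma sum_mod_eq_if_p_nonzero:
  assumes s: "s \<in> Is" and m: "m \<in> Om" and pm: "p m s \<noteq> 0"
  shows "(\<Sum>j<n. m j) mod d = f s"
proof (rule ccontr)
  assume ne: "(\<Sum>j<n. m j) mod d \<noteq> f s"
  let ?k = "(\<Sum>j<n. m j) mod d"
  let ?A = "{x\<in>Om. (\<Sum>j<n. x j) mod d = ?k}"
  have "?k < d" using d_pos by simp
  then have "correlator n d p s ?k = 0" using correlator_f s ne by auto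
  then have "(\<Sum>x\<in>?A. p x s) = 0" by (simp add: correlator_def)
  moreover have "(\<Sum>x\<in>?A. p x s) = 0 \<longleftrightarrow> (\<forall>x\<in>?A. p x s = 0)"
    using finite_outputs p_nonneg s by (intro sum_nonneg_eq_0_iff) auto
  ultimately have "\<forall>x\<in>?A. p x s = 0" by blast
  then show False using m pm by auto
qed

lemma sum_dot_distr: assumes s: "s \<in> Is" shows "(\<Sum>v<d. D K s v) = 1"
proof -
  have "(\<Sum>v<d. D K s v) = (\<Sum>m\<in>Om. \<Sum>v<d. if v = dot n K m mod d then p m s else 0)"
    unfolding dot_distr_def by (subst sum.swap) (auto intro!: sum.cong)
  also have "\<dots> = (\<Sum>m\<in>Om. p m s)" using d_pos by (simp add: sum.delta)
  finally show ?thesis using sum_p s by simp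
qed

lemma dot_distr_if_constant:
  assumes s: "s \<in> Is" and cst: "constant_fun (D K s)"
  shows "D K s v = 1 / real d"
proof -
  have "(\<Sum>v<d. D K s v) = (\<Sum>v<d. D K s 0)"
    using cst by (intro sum.cong) (auto simp: constant_fun_def)
  then have "real d * D K s 0 = 1" using sum_dot_distr[OF s] by simp
  moreover have "D K s v = D K s 0" using cst unfolding constant_fun_def by blast
  ultimately show ?thesis using d_pos by (simp add: field_simps)
qed

lemma dot_distr_indep:
  assumes J: "J \<subseteq> {..<n}" and K0: "\<forall>j\<in>J. K j = 0" and s: "s \<in> Is" and s': "s' \<in> Is"
    and agree: "\<forall>j\<in>{..<n}-J. s j = s' j"
  shows "D K s = D K s'"
proof
  fix v
  have "(\<Sum>m\<in>{x\<in>Om. zero_on J x = y}. p m s) = (\<Sum>m\<in>{x\<in>Om. zero_on J x = y}. p m s')"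
    if y: "y \<in> zero_on J ` Om" for y
  proof -
    obtain m0 where m0: "m0 \<in> Om" "y = zero_on J m0" using y by auto
    have "{x\<in>Om. zero_on J x = y} = {x\<in>Om. \<forall>j\<in>{..<n}-J. x j = m0 j}"
      using zero_on_eq_iff[OF _ m0(1)] m0(2) by auto
    moreover have "(\<Sum>m\<in>{x\<in>Om. \<forall>j\<in>{..<n}-J. x j = m0 j}. p m s)
                 = (\<Sum>m\<in>{x\<in>Om. \<forall>j\<in>{..<n}-J. x j = m0 j}. p m s')"
      using ns J s s' agree m0(1) unfolding non_signalling_def by blast
    ultimately show ?thesis by simp
  qed
  then show "D K s v = D K s' v" unfolding dot_distr_by_marginals[OF K0] by (intro sum.cong) auto
qed

lemma dot_coeff_shift_cong:
  assumes s: "s \<in> Is" and m: "m \<in> Om" and pm: "p m s \<noteq> 0"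
  shows "[dot n (coeff_shift d K a) m = dot n K m + (d - a) * f s] (mod d)"
proof -
  have "[dot n (coeff_shift d K a) m = (\<Sum>j<n. (K j + (d - a)) * m j)] (mod d)"
    unfolding dot_def coeff_shift_def by (intro cong_sum cong_mult) (auto simp: cong_def)
  also have "(\<Sum>j<n. (K j + (d - a)) * m j) = dot n K m + (d - a) * (\<Sum>j<n. m j)"
    by (simp add: dot_def algebra_simps sum.distrib sum_distrib_left)
  also have "[dot n K m + (d - a) * (\<Sum>j<n. m j) = dot n K m + (d - a) * f s] (mod d)"
    using sum_mod_eq_if_p_nonzero[OF s m pm] f_range s
    by (intro cong_add cong_mult) (auto simp: cong_def)
  finally show ?thesis .
qed

lemma dot_distr_coeff_shift:
  assumes s: "s \<in> Is"
  shows "D K s v = D (coeff_shift d K a) s (v + (d - a) * f s)"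
  unfolding dot_distr_def
proof (rule sum.cong[OF refl])
  fix m assume m: "m \<in> Om"
  show "(if dot n K m mod d = v mod d then p m s else 0) =
        (if dot n (coeff_shift d K a) m mod d = (v + (d - a) * f s) mod d then p m s else 0)"
  proof (cases "p m s = 0")
    case False
    have "dot n (coeff_shift d K a) m mod d = (v + (d - a) * f s) mod d
          \<longleftrightarrow> [dot n K m + (d - a) * f s = v + (d - a) * f s] (mod d)"
      using dot_coeff_shift_cong[OF s m False] unfolding cong_def by simp
    also have "\<dots> \<longleftrightarrow> dot n K m mod d = v mod d"
      by (simp only: cong_add_rcancel_nat) (simp add: cong_def)
    finally show ?thesis by simp
  qed simp
qed

lemma dot_distr_two_coeff_shifts:
  assumes s: "s \<in> Is" and b: "b \<le> d"
  shows "D (coeff_shift d K b) s y = D (coeff_shift d K a) s (y + (b + (d - a)) * f s)"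
proof -
  have "(y + b * f s + (d - b) * f s) mod d = y mod d"
    using b by (simp add: add.assoc add_mult_distrib[symmetric])
  then have "D (coeff_shift d K b) s y = D (coeff_shift d K b) s (y + b * f s + (d - b) * f s)"
    by (metis dot_distr_mod)
  also have "\<dots> = D K s (y + b * f s)" by (rule dot_distr_coeff_shift[OF s, symmetric])
  also have "\<dots> = D (coeff_shift d K a) s (y + b * f s + (d - a) * f s)"
    by (rule dot_distr_coeff_shift[OF s])
  finally show ?thesis by (simp add: algebra_simps)
qed

lemma constant_dot_distr_upd_iff:
  assumes k: "k \<in> Om" and s: "s \<in> Is" and j: "j < n" and t: "t < c j"
  shows "constant_fun (D k s) \<longleftrightarrow> constant_fun (D k (s(j:=t)))"
proof -
  let ?Kj = "coeff_shift d k (k j)"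
  have s': "s(j:=t) \<in> Is" using s j t by (auto simp: inputs_def)
  have per: "\<forall>v. D ?Kj s' (v mod d) = D ?Kj s' v" for s' by (simp add: dot_distr_mod)
  have "\<forall>l\<in>{j}. ?Kj l = 0" using coeff_shift_self k j by (auto simp: outputs_def)
  then have indep: "D ?Kj s = D ?Kj (s(j:=t))"
    using j s s' by (intro dot_distr_indep[of "{j}"]) auto
  have "constant_fun (D k s') \<longleftrightarrow> constant_fun (D ?Kj s')" if "s' \<in> Is" for s'
  proof -
    have "D k s' = (\<lambda>v. D ?Kj s' (v + (d - k j) * f s'))"
      by (rule ext) (rule dot_distr_coeff_shift[OF that])
    then show ?thesis using constant_fun_shift_iff[OF per d_pos] by simp
  qed
  then show ?thesis using s s' indep by simp
qed

lemma constant_dot_distr_iff: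
  assumes k: "k \<in> Om" and s: "s \<in> Is" and s': "s' \<in> Is"
  shows "constant_fun (D k s) \<longleftrightarrow> constant_fun (D k s')"
proof -
  define h where "h r = (\<lambda>j. if j < r then s' j else s j)" for r
  have "r \<le> n \<Longrightarrow> h r \<in> Is \<and> (constant_fun (D k s) \<longleftrightarrow> constant_fun (D k (h r)))" for r
  proof (induction r)
    case 0 then show ?case using s by (simp add: h_def)
  next
    case (Suc r)
    have rn: "r < n" and t: "s' r < c r" using Suc.prems s' by (auto simp: inputs_def)
    have eq: "h (Suc r) = (h r)(r := s' r)" by (auto simp: h_def fun_eq_iff)
    have IH: "h r \<in> Is" "constant_fun (D k s) \<longleftrightarrow> constant_fun (D k (h r))" using Suc by auto
    moreover have "(h r)(r := s' r) \<in> Is" using IH(1) rn t by (auto simp: inputs_def)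
    ultimately show ?case unfolding eq using constant_dot_distr_upd_iff[OF k IH(1) rn t] by blast
  qed
  moreover have "h n = s'" using s s' by (auto simp: h_def inputs_def fun_eq_iff)
  ultimately show ?thesis by auto
qed

text \<open>Comparing the four inputs \<open>u\<close>, \<open>u\<close> with \<open>s\<^sub>i\<close>, with \<open>s\<^sub>j\<close> and with both reset to \<open>0\<close>:
  the coefficient shifts by \<open>k\<^sub>i\<close> and by \<open>k\<^sub>j\<close> make the law blind to \<open>s\<^sub>i\<close> and to \<open>s\<^sub>j\<close>
  respectively, and relate to each other by a translation proportional to \<open>f\<close>.\<close>

lemma additive_pair_if_not_constant:
  assumes k: "k \<in> Om" and i: "i < n" and j: "j < n" and kij: "k i \<noteq> k j"
    and u: "u \<in> Is" and nc: "\<not> constant_fun (D k u)"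
  shows "[f u + f (zero_on {i,j} u) = f (zero_on {i} u) + f (zero_on {j} u)] (mod d)"
proof -
  define a b where "a = k i" and "b = k j"
  have ad: "a < d" and bd: "b < d" using k i j by (auto simp: outputs_def a_def b_def)
  define Ki Kj where "Ki = coeff_shift d k a" and "Kj = coeff_shift d k b"
  define cc where "cc = b + (d - a)"
  have cop: "coprime cc d" unfolding cc_def using not_dvd_add_diff[OF ad bd] kij
      prime_imp_coprime[OF prime_d] coprime_commute a_def b_def by blast
  define v w x where "v = zero_on {i} u" and "w = zero_on {j} u" and "x = zero_on {i,j} u"
  have vI: "v \<in> Is" and wI: "w \<in> Is" and xI: "x \<in> Is"
    using zero_on_inputs[OF c_pos u] by (auto simp: v_def w_def x_def)
  have Ki0: "\<forall>l\<in>{i}. Ki l = 0" and Kj0: "\<forall>l\<in>{j}. Kj l = 0"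
    using coeff_shift_self ad bd by (auto simp: Ki_def Kj_def a_def b_def)
  have i1: "D Ki u = D Ki v"
    by (rule dot_distr_indep[OF _ Ki0 u vI]) (use i in \<open>auto simp: v_def zero_on_def\<close>)
  have i2: "D Ki w = D Ki x"
    by (rule dot_distr_indep[OF _ Ki0 wI xI]) (use i in \<open>auto simp: w_def x_def zero_on_def\<close>)
  have i3: "D Kj u = D Kj w"
    by (rule dot_distr_indep[OF _ Kj0 u wI]) (use j in \<open>auto simp: w_def zero_on_def\<close>)
  have i4: "D Kj v = D Kj x"
    by (rule dot_distr_indep[OF _ Kj0 vI xI]) (use j in \<open>auto simp: v_def x_def zero_on_def\<close>)
  have E: "D Kj s y = D Ki s (y + cc * f s)" if "s \<in> Is" for s y
    unfolding Ki_def Kj_def cc_def by (rule dot_distr_two_coeff_shifts[OF that]) (use bd in simp)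
  define P Q where "P = D Ki u" and "Q = D Ki w"
  have h1: "P (y + cc * f u) = Q (y + cc * f w)" for y
    using E[OF u, of y] E[OF wI, of y] i3 by (simp add: P_def Q_def)
  have h2: "P (y + cc * f v) = Q (y + cc * f x)" for y
    using E[OF vI, of y] E[OF xI, of y] i4 i1 i2 by (simp add: P_def Q_def)
  have "\<forall>y. P (y + (cc * f u + cc * f x)) = P (y + (cc * f v + cc * f w))"
    using translate_eq_if_related[OF h1 h2] by blast
  moreover have per: "\<forall>z. P (z mod d) = P z" by (simp add: P_def dot_distr_mod)
  moreover have "\<not> constant_fun P"
  proof -
    have "D k u = (\<lambda>z. P (z + (d - a) * f u))"
      unfolding P_def Ki_def by (rule ext) (rule dot_distr_coeff_shift[OF u])
    then show ?thesis using nc constant_fun_shift_iff[OF per d_pos] by simp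
  qed
  ultimately have "[cc * f u + cc * f x = cc * f v + cc * f w] (mod d)"
    by (rule cong_if_shift_invariant[OF prime_d, rotated 2])
  then have "[cc * (f u + f x) = cc * (f v + f w)] (mod d)" by (simp add: distrib_left)
  then have "[f u + f x = f v + f w] (mod d)" using cong_mult_lcancel_nat[OF cop] by blast
  then show ?thesis by (simp add: v_def w_def x_def)
qed

lemma constant_dot_distr_if_nonconstant:
  assumes nbl: "\<not> bipartite_linear n c d f"
    and k: "k \<in> Om" and j0: "j0 < n" and kj0: "k j0 \<noteq> k 0" and s: "s \<in> Is"
  shows "constant_fun (D k s)"
proof (rule ccontr)
  assume "\<not> constant_fun (D k s)"
  then have nc: "\<not> constant_fun (D k u)" if "u \<in> Is" for u
    using constant_dot_distr_iff[OF k that s] by blast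
  define J where "J = {j. j < n \<and> k j = k 0}"
  have "additive_between n c d f {i} {j}" if ij: "i \<in> J" "j \<in> {..<n} - J" for i j
    unfolding additive_between_def
  proof
    fix u assume u: "u \<in> Is"
    have "i < n" "j < n" "k i \<noteq> k j" using ij by (auto simp: J_def)
    from additive_pair_if_not_constant[OF k this u nc[OF u]]
    show "[f u + f (zero_on ({i} \<union> {j}) u) = f (zero_on {i} u) + f (zero_on {j} u)] (mod d)"
      by (simp add: insert_commute)
  qed
  then have "additive_between n c d f {i} ({..<n} - J)" if "i \<in> J" for i
    using that by (intro additive_between_finite[OF c_pos]) auto
  then have "additive_between n c d f ({..<n} - J) {i}" if "i \<in> J" for i
    using that additive_between_sym by blast
  moreover have "finite J" by (simp add: J_def)
  ultimately have "additive_between n c d f ({..<n} - J) J"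
    by (intro additive_between_finite[OF c_pos]) auto
  then have "additive_between n c d f J ({..<n} - J)" by (rule additive_between_sym[THEN iffD1])
  moreover have "0 \<in> J" "J \<subset> {..<n}" using n_pos j0 kj0 by (auto simp: J_def)
  ultimately have "bipartite_linear n c d f"
    by (intro bipartite_linear_if_additive_between[OF c_pos f_range]) auto
  then show False using nbl by blast
qed

lemma dot_distr_const_coeffs:
  assumes s: "s \<in> Is" and x: "x \<in> Om" and xs: "(\<Sum>j<n. x j) mod d = f s"
  shows "D (const_coeffs n t) s (dot n (const_coeffs n t) x) = 1"
proof -
  have "D (const_coeffs n t) s (dot n (const_coeffs n t) x) = (\<Sum>m\<in>Om. p m s)"
    unfolding dot_distr_def
  proof (rule sum.cong[OF refl])
    fix m assume m: "m \<in> Om"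
    show "(if dot n (const_coeffs n t) m mod d = dot n (const_coeffs n t) x mod d
           then p m s else 0) = p m s"
    proof (cases "p m s = 0")
      case False
      then have "t * ((\<Sum>j<n. m j) mod d) mod d = t * ((\<Sum>j<n. x j) mod d) mod d"
        using sum_mod_eq_if_p_nonzero[OF s m] xs by simp
      then show ?thesis by (simp add: dot_const_coeffs mod_mult_right_eq)
    qed simp
  qed
  then show ?thesis using sum_p[OF s] by simp
qed

text \<open>Two evaluations of \<open>\<Sum>\<^sub>k P(k\<cdot>m \<equiv> k\<cdot>x)\<close>: summing over outputs first, a given \<open>m \<noteq> x\<close>
  satisfies \<open>k\<cdot>m \<equiv> k\<cdot>x\<close> for exactly \<open>d\<^sup>n\<^sup>-\<^sup>1\<close> coefficient vectors \<open>k\<close>.\<close>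

lemma sum_dot_distr_by_outputs:
  assumes s: "s \<in> Is" and x: "x \<in> Om"
  shows "(\<Sum>k\<in>Om. D k s (dot n k x)) = real d ^ n * p x s + real d ^ (n - 1) * (1 - p x s)"
proof -
  let ?N = "\<lambda>m. real (card {k\<in>Om. dot n k m mod d = dot n k x mod d})"
  have "(\<Sum>k\<in>Om. D k s (dot n k x)) = (\<Sum>m\<in>Om. ?N m * p m s)"
    unfolding dot_distr_def
    by (subst sum.swap) (simp add: sum_if_const[OF finite_outputs])
  also have "\<dots> = ?N x * p x s + (\<Sum>m\<in>Om - {x}. ?N m * p m s)"
    by (rule sum.remove[OF finite_outputs x])
  also have "(\<Sum>m\<in>Om - {x}. ?N m * p m s) = (\<Sum>m\<in>Om - {x}. real d ^ (n - 1) * p m s)"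
    by (rule sum.cong[OF refl]) (use card_dot_cong_eq[OF prime_d _ x] in auto)
  also have "\<dots> = real d ^ (n - 1) * (1 - p x s)"
    using sum.remove[OF finite_outputs x, of "\<lambda>m. p m s"] sum_p[OF s]
    by (simp add: sum_distrib_left[symmetric])
  finally show ?thesis by (simp add: card_outputs)
qed

lemma sum_dot_distr_by_coeffs:
  assumes nbl: "\<not> bipartite_linear n c d f"
    and s: "s \<in> Is" and x: "x \<in> Om" and xs: "(\<Sum>j<n. x j) mod d = f s"
  shows "(\<Sum>k\<in>Om. D k s (dot n k x)) = real d + real d ^ (n - 1) - 1"
proof -
  define C where "C = const_coeffs n ` {..<d}"
  have CO: "C \<subseteq> Om" using const_coeffs_outputs n_pos by (simp add: C_def)
  have cardC: "card C = d" using inj_on_const_coeffs[OF n_pos] by (simp add: C_def card_image)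
  have dn: "real d ^ n = real d * real d ^ (n - 1)"
    using n_pos by (simp add: power_eq_if[of "real d" n])
  have "card (Om - C) = d ^ n - d" using card_Diff_subset[OF _ CO] finite_subset[OF CO]
    by (simp add: cardC card_outputs finite_outputs)
  moreover have "d \<le> d ^ n" using card_mono[OF finite_outputs CO] by (simp add: cardC card_outputs)
  ultimately have cardOC: "real (card (Om - C)) = real d * real d ^ (n - 1) - real d"
    using dn by (simp add: of_nat_diff)
  have "(\<Sum>k\<in>Om. D k s (dot n k x)) = (\<Sum>k\<in>C. D k s (dot n k x)) + (\<Sum>k\<in>Om - C. D k s (dot n k x))"
    using sum.subset_diff[OF CO finite_outputs] by (simp add: add.commute)
  also have "(\<Sum>k\<in>C. D k s (dot n k x)) = (\<Sum>k\<in>C. 1)"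
    by (rule sum.cong[OF refl]) (auto simp: C_def dot_distr_const_coeffs[OF s x xs])
  also have "(\<Sum>k\<in>Om - C. D k s (dot n k x)) = (\<Sum>k\<in>Om - C. 1 / real d)"
  proof (rule sum.cong[OF refl])
    fix k assume k: "k \<in> Om - C"
    then have "\<exists>j<n. k j \<noteq> k 0"
      using n_pos by (intro nonconstant_if_notin_const_coeffs) (auto simp: C_def)
    then obtain j where "j < n" "k j \<noteq> k 0" by blast
    then have "constant_fun (D k s)"
      using k constant_dot_distr_if_nonconstant[OF nbl _ _ _ s] by blast
    then show "D k s (dot n k x) = 1 / real d" by (rule dot_distr_if_constant[OF s])
  qed
  finally have "(\<Sum>k\<in>Om. D k s (dot n k x)) = real d + real (card (Om - C)) / real d"
    using cardC by simp
  also have "real (card (Om - C)) / real d = real d ^ (n - 1) - 1"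
    using d_pos by (simp add: cardOC field_simps)
  finally show ?thesis by simp
qed

theorem p_eq_uniform:
  assumes nbl: "\<not> bipartite_linear n c d f" and s: "s \<in> Is" and x: "x \<in> Om"
  shows "p x s = (if (\<Sum>j<n. x j) mod d = f s then 1 / real d ^ (n - 1) else 0)"
proof (cases "(\<Sum>j<n. x j) mod d = f s")
  case True
  define q where "q = real d ^ (n - 1)"
  have dn: "real d ^ n = real d * q"
    using n_pos by (simp add: q_def power_eq_if[of "real d" n])
  have eq: "real d ^ n * p x s + q * (1 - p x s) = real d + q - 1"
    using sum_dot_distr_by_outputs[OF s x] sum_dot_distr_by_coeffs[OF nbl s x True]
    by (simp add: q_def)
  have "(p x s * q - 1) * (real d - 1) = real d * q * p x s + q * (1 - p x s) - (real d + q - 1)"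
    by (simp add: algebra_simps)
  also have "\<dots> = 0" using eq dn by simp
  moreover have "1 < d" using prime_d prime_gt_1_nat by blast
  ultimately have "p x s * q = 1" by simp
  then show ?thesis using True d_pos by (simp add: q_def field_simps)
next
  case False
  then show ?thesis using sum_mod_eq_if_p_nonzero[OF s x] by auto
qed

end

section \<open>The uniform box on a correlator class\<close>

definition uniform_box :: "nat \<Rightarrow> nat \<Rightarrow> ((nat \<Rightarrow> nat) \<Rightarrow> nat) \<Rightarrow> (nat \<Rightarrow> nat) \<Rightarrow> (nat \<Rightarrow> nat) \<Rightarrow> real"
where
  "uniform_box n d f = (\<lambda>m s. if (\<Sum>j<n. m j) mod d = f s then 1 / real d ^ (n - 1) else 0)"

lemma is_cond_distr_uniform_box:
  assumes "0 < n" "prime d" "\<forall>s\<in>inputs c n. f s < d"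
  shows "is_cond_distr n c d (uniform_box n d f)"
  unfolding is_cond_distr_def
proof (intro ballI conjI)
  fix s assume s: "s \<in> inputs c n"
  have "(\<Sum>m\<in>outputs d n. uniform_box n d f m s)
        = real (card {m\<in>outputs d n. (\<Sum>j<n. m j) mod d = f s}) * (1 / real d ^ (n - 1))"
    unfolding uniform_box_def by (rule sum_if_const[OF finite_outputs])
  then show "(\<Sum>m\<in>outputs d n. uniform_box n d f m s) = 1"
    using card_outputs_sum_mod_eq[OF assms(2,1)] assms s prime_gt_0_nat by simp
qed (simp add: uniform_box_def)

lemma correlator_uniform_box:
  assumes "0 < n" "prime d" and s: "s \<in> inputs c n" and k: "k < d"
  shows "correlator n d (uniform_box n d f) s k = (if k = f s then 1 else 0)"
proof -
  have "correlator n d (uniform_box n d f) s k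
        = (\<Sum>m\<in>{m\<in>outputs d n. (\<Sum>j<n. m j) mod d = k}. if k = f s then 1 / real d ^ (n - 1) else 0)"
    unfolding correlator_def by (rule sum.cong) (auto simp: uniform_box_def)
  then show ?thesis
    using card_outputs_sum_mod_eq[OF assms(2,1) k] assms prime_gt_0_nat by simp
qed

lemma non_signalling_uniform_box:
  assumes pr: "prime d" and frange: "\<forall>s\<in>inputs c n. f s < d"
  shows "non_signalling n c d (uniform_box n d f)"
  unfolding non_signalling_def
proof (intro allI impI ballI)
  fix J s s' m0
  assume J: "J \<subseteq> {..<n}" and s: "s \<in> inputs c n" and s': "s' \<in> inputs c n"
    and ag: "\<forall>j\<in>{..<n} - J. s j = s' j" and m0: "m0 \<in> outputs d n"
  define F where "F = {m\<in>outputs d n. \<forall>j\<in>{..<n} - J. m j = m0 j}"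
  have finF: "finite F" using finite_outputs by (simp add: F_def)
  have "(\<Sum>m\<in>F. uniform_box n d f m s) = (\<Sum>m\<in>F. uniform_box n d f m s')"
  proof (cases "J = {}")
    case True
    then have "zero_on {} s = zero_on {} s'"
      using ag s s' by (intro zero_on_eq_if_agree) (auto simp: inputs_def)
    then have "s = s'" by (simp add: zero_on_def)
    then show ?thesis by simp
  next
    case False
    then obtain i where i: "i \<in> J" by blast
    have "card {m\<in>F. (\<Sum>j<n. m j) mod d = v} = card {m\<in>F. m i = 0}" if "v < d" for v
      using i J that by (intro card_sum_mod_eq[OF pr finF]) (auto simp: F_def outputs_def)
    then show ?thesis
      unfolding uniform_box_def using frange s s' by (simp add: sum_if_const[OF finF])
  qed
  then show "(\<Sum>m\<in>{m\<in>outputs d n. \<forall>j\<in>{..<n} - J. m j = m0 j}. uniform_box n d f m s) =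
          (\<Sum>m\<in>{m\<in>outputs d n. \<forall>j\<in>{..<n} - J. m j = m0 j}. uniform_box n d f m s')"
    by (simp add: F_def)
qed

theorem theorem2p3p1:
  fixes n d :: nat and c :: "nat \<Rightarrow> nat" and f :: "(nat \<Rightarrow> nat) \<Rightarrow> nat"
  assumes "n \<ge> 2" and "prime d"
    and "\<forall>j<n. c j > 0"
    and "\<forall>s\<in>inputs c n. f s < d"
    and "\<not> bipartite_linear n c d f"
  shows "(\<forall>p. is_cond_distr n c d p \<and> non_signalling n c d p \<and>
            (\<forall>s\<in>inputs c n. \<forall>k<d. correlator n d p s k = (if k = f s then 1 else 0))
          \<longrightarrow> (\<forall>s\<in>inputs c n. \<forall>m\<in>outputs d n.
                p m s = (if (\<Sum>j<n. m j) mod d = f s then 1 / real d ^ (n - 1) else 0)))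
       \<and> (let p0 = (\<lambda>m s. if (\<Sum>j<n. m j) mod d = f s then 1 / real d ^ (n - 1) else 0)
          in is_cond_distr n c d p0 \<and> non_signalling n c d p0 \<and>
             (\<forall>s\<in>inputs c n. \<forall>k<d. correlator n d p0 s k = (if k = f s then 1 else 0)))"
proof -
  have n_pos: "0 < n" using assms(1) by simp
  have unique: "\<forall>p. is_cond_distr n c d p \<and> non_signalling n c d p \<and>
            (\<forall>s\<in>inputs c n. \<forall>k<d. correlator n d p s k = (if k = f s then 1 else 0))
          \<longrightarrow> (\<forall>s\<in>inputs c n. \<forall>m\<in>outputs d n.
                p m s = (if (\<Sum>j<n. m j) mod d = f s then 1 / real d ^ (n - 1) else 0))"
  proof (intro allI impI ballI)
    fix p s m
    assume "is_cond_distr n c d p \<and> non_signalling n c d p \<and>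
            (\<forall>s\<in>inputs c n. \<forall>k<d. correlator n d p s k = (if k = f s then 1 else 0))"
      and s: "s \<in> inputs c n" and m: "m \<in> outputs d n"
    then interpret deterministic_ns_box n d c f p
      using n_pos assms(2-4) by unfold_locales auto
    show "p m s = (if (\<Sum>j<n. m j) mod d = f s then 1 / real d ^ (n - 1) else 0)"
      by (rule p_eq_uniform[OF assms(5) s m])
  qed
  have "is_cond_distr n c d (uniform_box n d f)" "non_signalling n c d (uniform_box n d f)"
    "\<forall>s\<in>inputs c n. \<forall>k<d. correlator n d (uniform_box n d f) s k = (if k = f s then 1 else 0)"
    using is_cond_distr_uniform_box[OF n_pos assms(2,4)] non_signalling_uniform_box[OF assms(2,4)]
      correlator_uniform_box[OF n_pos assms(2)] by auto
  then show ?thesis using unique unfolding Let_def uniform_box_def by blast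
qed

end
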